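(* In the setting of the context, assume $\log(n)q(n)\to\delta^*\in(0,\infty)$, $m(n)^{-1}\log n\to0$ and $m(n)^{-1}v_n\to\infty$. Let $i_U=\big\lceil m(n)\frac{H_0-H_-+q(n)}{H_+-H_-}+U\big\rceil$. Then $\mathbb P^n_{H_0,\sigma_0}(\widehat i_n=i_U)\to1$.
   Context: $\Theta=[H_-,H_+]\times[\sigma_-,\sigma_+]\subset(0,1)\times(0,\infty)$, $(H_0,\sigma_0)$ interior; under $\mathbb P^n_{H_0,\sigma_0}$ one has a pilot estimator $\widehat H_n$ of $H_0$ and a sequence $v_n\to\infty$ such that $v_n(\widehat H_n-H_0)$ is bounded in probability (in the paper, $\widehat H_n$ is the preaveraged Whittle estimator with window $k(n)=n^{2H_+/(2H_++1)}(1+o(1))$ and $v_n=n^{1/(4H_++2)}$); $q(n)>0$, $m(n)$ positive integers, $U$ a uniform random variable on $[0,1]$ independent of the data (hence of $\widehat H_n$); $\widehat i_n=\big\lceil m(n)\frac{\widehat H_n-H_-+q(n)}{H_+-H_-}+U\big\rceil$. *)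

theory Defs
  imports "HOL-Probability.Probability"
begin

end

theory Submission
  imports Defs
begin

(* Write the rescaled estimator as x + U + Y\<^sub>n, where x is the deterministic centre and
   Y\<^sub>n = m(n) (Hhat\<^sub>n - H\<^sub>0) / (H\<^sub>+ - H\<^sub>-).  As v\<^sub>n (Hhat\<^sub>n - H\<^sub>0) is bounded in probability
   and m(n) = o(v\<^sub>n), Y\<^sub>n tends to 0 in probability.  A perturbation of size at most e can
   change the ceiling of x + U only if x + U lies within e of an integer, and as U is uniform
   on [0,1] this has probability at most 8 e, whatever x is. *)

definition near_integers :: "real \<Rightarrow> real set" where
  "near_integers e = {t. \<exists>k::int. \<bar>t - of_int k\<bar> \<le> e}"

lemma near_integers_in_borel [measurable]: "near_integers e \<in> sets borel"
  unfolding near_integers_def by measurable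

lemma ceiling_add_neq_imp_near_integers:
  fixes y a e :: real
  assumes "\<bar>a\<bar> \<le> e" and "\<lceil>y + a\<rceil> \<noteq> \<lceil>y\<rceil>"
  shows "y \<in> near_integers e"
proof (cases "\<lceil>y\<rceil> < \<lceil>y + a\<rceil>")
  case True
  then have "of_int \<lceil>y\<rceil> < y + a" by (simp add: less_ceiling_iff)
  with assms(1) le_of_int_ceiling[of y] show ?thesis
    unfolding near_integers_def by (intro CollectI exI[of _ "\<lceil>y\<rceil>"]) auto
next
  case False
  with assms(2) have "\<lceil>y + a\<rceil> < \<lceil>y\<rceil>" by simp
  then have "y + a \<le> of_int \<lceil>y\<rceil> - 1" by (simp add: ceiling_less_iff)
  moreover have "of_int \<lceil>y\<rceil> - 1 < y" by linarith
  ultimately show ?thesis using assms(1)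
    unfolding near_integers_def by (intro CollectI exI[of _ "\<lceil>y\<rceil> - 1"]) auto
qed

lemma near_integers_shift_unit_interval:
  fixes x u e :: real
  assumes "u \<in> {0..1}" and "x + u \<in> near_integers e" and "e \<le> 1"
  shows "u \<in> (\<Union>k\<in>{\<lceil>x\<rceil> - 1..\<lceil>x\<rceil> + 2}. {of_int k - x - e..of_int k - x + e})"
proof -
  obtain k :: int where k: "\<bar>x + u - of_int k\<bar> \<le> e"
    using assms(2) unfolding near_integers_def by auto
  have "x + u - e \<le> of_int k" and "of_int k \<le> x + u + e"
    using k by (auto simp: abs_le_iff)
  moreover have "x \<le> of_int \<lceil>x\<rceil>" and "of_int \<lceil>x\<rceil> < x + 1"
    by linarith+
  ultimately have "of_int \<lceil>x\<rceil> - 2 < real_of_int k" and "real_of_int k < of_int \<lceil>x\<rceil> + 3"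
    using assms(1,3) by auto linarith
  then have "\<lceil>x\<rceil> - 1 \<le> k" and "k \<le> \<lceil>x\<rceil> + 2"
    by linarith+
  with k show ?thesis by (intro UN_I[of k]) (auto simp: abs_le_iff)
qed

lemma prob_shift_uniform_near_integers_le:
  fixes M :: "'a measure" and U :: "'a \<Rightarrow> real" and x e :: real
  assumes M: "prob_space M" and U: "U \<in> borel_measurable M"
    and U_unif: "distr M lborel U = uniform_measure lborel {0..1}" and e: "0 \<le> e"
  shows "measure M {\<omega> \<in> space M. x + U \<omega> \<in> near_integers e} \<le> 8 * e"
proof -
  interpret prob_space M by (rule M)
  show ?thesis
  proof (cases "e \<le> 1")
    case False
    then show ?thesis
      using prob_le_1[of "{\<omega> \<in> space M. x + U \<omega> \<in> near_integers e}"] by linarith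
  next
    case True
    define N where "N = uniform_measure lborel {0..1::real}"
    interpret N: prob_space N unfolding N_def by (rule prob_space_uniform_measure) auto
    define J where "J = {\<lceil>x\<rceil> - 1..\<lceil>x\<rceil> + 2}"
    define I where "I k = {of_int k - x - e..of_int k - x + e}" for k
    let ?T = "{t. x + t \<in> near_integers e}"
    have cover: "?T \<subseteq> -{0..1} \<union> (\<Union>k\<in>J. I k)"
      using near_integers_shift_unit_interval[of _ x e, OF _ _ True] unfolding J_def I_def by blast
    have "measure M {\<omega> \<in> space M. x + U \<omega> \<in> near_integers e} = measure N ?T"
      using measure_distr[of U M lborel ?T] U U_unif
      by (simp add: N_def vimage_def Int_def conj_commute)
    also have "\<dots> \<le> measure N (-{0..1} \<union> (\<Union>k\<in>J. I k))"
      using cover by (intro N.finite_measure_mono) (auto simp: N_def I_def)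
    also have "\<dots> \<le> measure N (-{0..1}) + measure N (\<Union>k\<in>J. I k)"
      by (intro measure_Un_le) (auto simp: N_def I_def)
    also have "\<dots> = measure N (\<Union>k\<in>J. I k)"
      by (simp add: N_def)
    also have "\<dots> \<le> (\<Sum>k\<in>J. measure N (I k))"
      by (intro measure_UNION_le) (auto simp: N_def I_def J_def)
    also have "\<dots> \<le> of_nat (card J) * (2 * e)"
      using e by (intro sum_bounded_above) (auto simp: N_def I_def min_def max_def)
    also have "\<dots> = 8 * e" by (simp add: J_def)
    finally show ?thesis .
  qed
qed

definition bounded_in_prob :: "(nat \<Rightarrow> 'a measure) \<Rightarrow> (nat \<Rightarrow> 'a \<Rightarrow> real) \<Rightarrow> bool" where
  "bounded_in_prob M Y \<longleftrightarrow>
     (\<forall>\<epsilon>>0. \<exists>K. \<forall>n. measure (M n) {\<omega> \<in> space (M n). K < \<bar>Y n \<omega>\<bar>} \<le> \<epsilon>)"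

lemma bounded_in_prob_slower_rate_tendsto_zero:
  fixes M :: "nat \<Rightarrow> 'a measure" and X :: "nat \<Rightarrow> 'a \<Rightarrow> real" and v w :: "nat \<Rightarrow> real"
  assumes M: "\<And>n. prob_space (M n)" and X: "\<And>n. X n \<in> borel_measurable (M n)"
    and bounded: "bounded_in_prob M (\<lambda>n \<omega>. v n * X n \<omega>)"
    and rate: "filterlim (\<lambda>n. v n / w n) at_top sequentially" and e: "0 < e"
  shows "(\<lambda>n. measure (M n) {\<omega> \<in> space (M n). e < \<bar>w n * X n \<omega>\<bar>}) \<longlonglongrightarrow> 0"
proof (rule tendstoI)
  fix r :: real assume r: "0 < r"
  obtain K where K: "\<And>n. measure (M n) {\<omega> \<in> space (M n). K < \<bar>v n * X n \<omega>\<bar>} \<le> r / 2"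
    using bounded r unfolding bounded_in_prob_def by (meson half_gt_zero)
  define C where "C = max 1 (K / e)"
  have C: "0 < C" "K \<le> C * e"
    using e by (auto simp: C_def max_def divide_le_eq)
  from rate have "eventually (\<lambda>n. C \<le> v n / w n) sequentially"
    by (simp add: filterlim_at_top)
  then show "eventually (\<lambda>n. dist (measure (M n) {\<omega> \<in> space (M n). e < \<bar>w n * X n \<omega>\<bar>}) 0 < r)
      sequentially"
  proof eventually_elim
    case (elim n)
    interpret prob_space "M n" by (rule M)
    have "C * \<bar>w n\<bar> \<le> \<bar>v n\<bar>"
    proof (cases "w n = 0")
      case False
      have "C \<le> \<bar>v n / w n\<bar>"
        using elim abs_ge_self[of "v n / w n"] by linarith
      then have "C * \<bar>w n\<bar> \<le> \<bar>v n / w n\<bar> * \<bar>w n\<bar>"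
        by (rule mult_right_mono) simp
      with False show ?thesis by (simp add: abs_divide)
    qed simp
    then have scaled: "C * \<bar>w n * X n \<omega>\<bar> \<le> \<bar>v n * X n \<omega>\<bar>" for \<omega>
      by (simp add: abs_mult mult_right_mono mult.assoc[symmetric])
    have "K < \<bar>v n * X n \<omega>\<bar>" if "e < \<bar>w n * X n \<omega>\<bar>" for \<omega>
    proof -
      have "C * e < C * \<bar>w n * X n \<omega>\<bar>"
        using that C(1) by (rule mult_strict_left_mono)
      with C(2) scaled[of \<omega>] show ?thesis by linarith
    qed
    then have "{\<omega> \<in> space (M n). e < \<bar>w n * X n \<omega>\<bar>} \<subseteq> {\<omega> \<in> space (M n). K < \<bar>v n * X n \<omega>\<bar>}"
      by auto
    moreover have "{\<omega> \<in> space (M n). K < \<bar>v n * X n \<omega>\<bar>} \<in> events"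
      using X[of n] by measurable
    ultimately have "prob {\<omega> \<in> space (M n). e < \<bar>w n * X n \<omega>\<bar>} \<le> r / 2"
      using K[of n] by (meson finite_measure_mono order_trans)
    with r show ?case by simp
  qed
qed

lemma prob_ceiling_perturbation_eq_ge:
  fixes M :: "'a measure" and U Y :: "'a \<Rightarrow> real" and x e :: real
  assumes M: "prob_space M"
    and [measurable]: "Y \<in> borel_measurable M" and U [measurable]: "U \<in> borel_measurable M"
    and U_unif: "distr M lborel U = uniform_measure lborel {0..1}" and e: "0 \<le> e"
  shows "1 - measure M {\<omega> \<in> space M. e < \<bar>Y \<omega>\<bar>} - 8 * e
    \<le> measure M {\<omega> \<in> space M. \<lceil>x + U \<omega> + Y \<omega>\<rceil> = \<lceil>x + U \<omega>\<rceil>}"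
proof -
  interpret prob_space M by (rule M)
  define S where "S = {\<omega> \<in> space M. \<lceil>x + U \<omega> + Y \<omega>\<rceil> = \<lceil>x + U \<omega>\<rceil>}"
  define A where "A = {\<omega> \<in> space M. e < \<bar>Y \<omega>\<bar>}"
  define B where "B = {\<omega> \<in> space M. x + U \<omega> \<in> near_integers e}"
  have "space M \<subseteq> S \<union> A \<union> B"
  proof
    fix \<omega> assume "\<omega> \<in> space M"
    then show "\<omega> \<in> S \<union> A \<union> B"
      using ceiling_add_neq_imp_near_integers[of "Y \<omega>" e "x + U \<omega>"]
      by (cases "\<omega> \<in> A") (auto simp: S_def A_def B_def)
  qed
  moreover have "S \<in> events" "A \<in> events" "B \<in> events"
    unfolding S_def A_def B_def by measurable
  ultimately have "1 \<le> prob S + prob A + prob B"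
    using prob_space finite_measure_mono[of "space M" "S \<union> A \<union> B"]
      measure_Un_le[of "S \<union> A" M B] measure_Un_le[of S M A]
    by auto
  moreover have "prob B \<le> 8 * e"
    unfolding B_def using M U U_unif e by (rule prob_shift_uniform_near_integers_le)
  ultimately show ?thesis by (simp add: S_def A_def)
qed

theorem lemma6p3:
  fixes M :: "nat \<Rightarrow> 'a measure"
    and Hhat U :: "nat \<Rightarrow> 'a \<Rightarrow> real"
    and Hm Hp sm sp H0 s0 \<delta> :: real
    and v q :: "nat \<Rightarrow> real"
    and m :: "nat \<Rightarrow> nat"
  assumes Theta: "0 < Hm" "Hm < Hp" "Hp < 1" "0 < sm" "sm < sp"
    and interior: "Hm < H0" "H0 < Hp" "sm < s0" "s0 < sp"
    and prob: "\<And>n. prob_space (M n)"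
    and Hhat_rv: "\<And>n. Hhat n \<in> borel_measurable (M n)"
    and U_rv: "\<And>n. U n \<in> borel_measurable (M n)"
    and U_unif: "\<And>n. distr (M n) lborel (U n) = uniform_measure lborel {0..1}"
    and indep: "\<And>n. prob_space.indep_var (M n) borel (Hhat n) borel (U n)"
    and v_inf: "filterlim v at_top sequentially"
    and tight: "\<And>\<epsilon>. \<epsilon> > 0 \<Longrightarrow> \<exists>K. \<forall>n.
         measure (M n) {\<omega> \<in> space (M n). \<bar>v n * (Hhat n \<omega> - H0)\<bar> > K} \<le> \<epsilon>"
    and q_pos: "\<And>n. q n > 0"
    and m_pos: "\<And>n. m n > 0"
    and q_lim: "(\<lambda>n. ln (real n) * q n) \<longlonglongrightarrow> \<delta>" and \<delta>_pos: "0 < \<delta>"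
    and m_log: "(\<lambda>n. ln (real n) / real (m n)) \<longlonglongrightarrow> 0"
    and m_v: "filterlim (\<lambda>n. v n / real (m n)) at_top sequentially"
  shows "(\<lambda>n. measure (M n) {\<omega> \<in> space (M n).
            \<lceil>real (m n) * (Hhat n \<omega> - Hm + q n) / (Hp - Hm) + U n \<omega>\<rceil> =
            \<lceil>real (m n) * (H0 - Hm + q n) / (Hp - Hm) + U n \<omega>\<rceil>}) \<longlonglongrightarrow> 1"
proof (rule tendstoI)
  fix r :: real assume r: "0 < r"
  define e where "e = min 1 (r / 32)"
  define w where "w n = real (m n) / (Hp - Hm)" for n
  have e: "0 < e" "8 * e \<le> r / 4"
    using r by (auto simp: e_def)
  have "filterlim (\<lambda>n. (Hp - Hm) * (v n / real (m n))) at_top sequentially"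
    using Theta by (intro filterlim_tendsto_pos_mult_at_top[OF tendsto_const _ m_v]) auto
  then have rate: "filterlim (\<lambda>n. v n / w n) at_top sequentially"
    by (simp add: w_def mult.commute)
  have "bounded_in_prob M (\<lambda>n \<omega>. v n * (Hhat n \<omega> - H0))"
    using tight unfolding bounded_in_prob_def by simp
  from bounded_in_prob_slower_rate_tendsto_zero[OF prob _ this rate e(1)] Hhat_rv
  have "eventually (\<lambda>n. measure (M n) {\<omega> \<in> space (M n). e < \<bar>w n * (Hhat n \<omega> - H0)\<bar>} < r / 2)
      sequentially"
    using r by (intro order_tendstoD(2)) auto
  then show "eventually (\<lambda>n. dist (measure (M n) {\<omega> \<in> space (M n).
      \<lceil>real (m n) * (Hhat n \<omega> - Hm + q n) / (Hp - Hm) + U n \<omega>\<rceil> =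
      \<lceil>real (m n) * (H0 - Hm + q n) / (Hp - Hm) + U n \<omega>\<rceil>}) 1 < r) sequentially"
  proof eventually_elim
    case (elim n)
    define x where "x = real (m n) * (H0 - Hm + q n) / (Hp - Hm)"
    have shift: "real (m n) * (Hhat n \<omega> - Hm + q n) / (Hp - Hm) + U n \<omega> =
        x + U n \<omega> + w n * (Hhat n \<omega> - H0)" for \<omega>
      by (simp add: x_def w_def diff_divide_distrib add_divide_distrib algebra_simps)
    let ?S = "{\<omega> \<in> space (M n). \<lceil>x + U n \<omega> + w n * (Hhat n \<omega> - H0)\<rceil> = \<lceil>x + U n \<omega>\<rceil>}"
    have "1 - measure (M n) {\<omega> \<in> space (M n). e < \<bar>w n * (Hhat n \<omega> - H0)\<bar>} - 8 * e
        \<le> measure (M n) ?S"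
      using prob Hhat_rv U_rv U_unif e(1)
      by (intro prob_ceiling_perturbation_eq_ge) auto
    moreover have "measure (M n) ?S \<le> 1"
      using prob by (rule prob_space.prob_le_1)
    ultimately show ?case
      unfolding dist_real_def x_def[symmetric] shift using elim e by linarith
  qed
qed

end
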